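(* Consider the general binary observation model: a signal $X\in[0,1]^N$ is drawn from a known prior supported on $[\tau_0,\tau_1]^N$ where $0<\tau_0\le\tau_1<1$; conditionally on $X$, the observations $Y_1,\dots,Y_N\in\{0,1\}$ are independent with $\mathbb{E}[Y_i\mid X]=X_i$; and $x\in\mathbb{R}$ is a (square-integrable) scalar function of $X$ to be estimated. Then for every integer $D\ge0$, \[ \mathrm{Corr}_{\le D}^2 \le \sum_{\alpha\in\{0,1\}^N,\ 0\le|\alpha|\le D} \frac{\kappa_\alpha^2}{(\tau_0(1-\tau_1))^{|\alpha|}}, \] where $\kappa_\alpha$ for $\alpha\in\{0,1\}^N$ is defined recursively by $\kappa_\alpha = \mathbb{E}[xX^\alpha] - \sum_{0\le\beta\lneq\alpha}\kappa_\beta\,\mathbb{E}[X^{\alpha-\beta}]$.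
   Context: For $\alpha\in\{0,1\}^N$: $|\alpha|=\sum_i\alpha_i$, $X^\alpha=\prod_i X_i^{\alpha_i}$; $\beta\le\alpha$ is entrywise; $\beta\lneq\alpha$ means $\beta\le\alpha$, $\beta\ne\alpha$. The degree-$D$ maximum correlation is $\mathrm{Corr}_{\le D} = \sup\{\mathbb{E}[f(Y)x]/\sqrt{\mathbb{E}[f(Y)^2]} : f\in\mathbb{R}[Y]_{\le D},\ \mathbb{E}[f(Y)^2]\ne0\}$, where $\mathbb{R}[Y]_{\le D}$ denotes real polynomials of degree at most $D$ in the coordinates of $Y$, expectations under the joint law of $(x,Y)$. *)

theory Defs
  imports "HOL-Probability.Probability"
begin

text \<open>The prior mu is a probability measure on signals
X : nat => real (coordinates 0..N-1).\<close>

definition binary_vectors :: "nat \<Rightarrow> (nat \<Rightarrow> real) set" where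
  "binary_vectors N = PiE {..<N} (\<lambda>_. {0, 1})"

definition bern_lik :: "nat \<Rightarrow> (nat \<Rightarrow> real) \<Rightarrow> (nat \<Rightarrow> real) \<Rightarrow> real" where
  "bern_lik N X y = (\<Prod>i<N. if y i = 1 then X i else 1 - X i)"

definition joint_exp :: "(nat \<Rightarrow> real) measure \<Rightarrow> nat \<Rightarrow>
    ((nat \<Rightarrow> real) \<Rightarrow> (nat \<Rightarrow> real) \<Rightarrow> real) \<Rightarrow> real" where
  "joint_exp mu N h = (\<integral>X. (\<Sum>y\<in>binary_vectors N. bern_lik N X y * h X y) \<partial>mu)"

text \<open>Real polynomials of degree at most D in y_0..y_{N-1}, written out explicitly:
exponent vectors e (zero outside {..<N}) with total degree at most D, coefficients c e.\<close>

definition monomials :: "nat \<Rightarrow> nat \<Rightarrow> (nat \<Rightarrow> nat) set" where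
  "monomials N D = {e. (\<forall>i\<ge>N. e i = 0) \<and> (\<Sum>i<N. e i) \<le> D}"

definition poly_eval :: "nat \<Rightarrow> nat \<Rightarrow> ((nat \<Rightarrow> nat) \<Rightarrow> real) \<Rightarrow> (nat \<Rightarrow> real) \<Rightarrow> real" where
  "poly_eval N D c y = (\<Sum>e\<in>monomials N D. c e * (\<Prod>i<N. y i ^ e i))"

definition corr_le :: "(nat \<Rightarrow> real) measure \<Rightarrow> nat \<Rightarrow> ((nat \<Rightarrow> real) \<Rightarrow> real) \<Rightarrow> nat \<Rightarrow> real" where
  "corr_le mu N g D = Sup
     {joint_exp mu N (\<lambda>X y. poly_eval N D c y * g X)
        / sqrt (joint_exp mu N (\<lambda>X y. (poly_eval N D c y)^2)) | c.
      joint_exp mu N (\<lambda>X y. (poly_eval N D c y)^2) \<noteq> 0}"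

text \<open>The cumulant-like quantities kappa_alpha, with alpha in {0,1}^N identified with
the finite set S = {i. alpha_i = 1}: beta \<le> alpha is T \<subseteq> S, alpha - beta is S - T,
X^alpha is prod_{i in S} X_i, |alpha| = card S.\<close>

function kappa :: "(nat \<Rightarrow> real) measure \<Rightarrow> ((nat \<Rightarrow> real) \<Rightarrow> real) \<Rightarrow> nat set \<Rightarrow> real" where
  "kappa mu g S = (if finite S then
      (\<integral>X. g X * (\<Prod>i\<in>S. X i) \<partial>mu)
      - (\<Sum>T\<in>{T. T \<subset> S}. kappa mu g T * (\<integral>X. (\<Prod>i\<in>S - T. X i) \<partial>mu))
    else 0)"
  by auto
termination
  by (relation "Wellfounded.measure (\<lambda>(mu, g, S). card S)") (auto intro: psubset_card_mono)

end

theory Submission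
  imports Defs
begin

text \<open>On binary vectors every polynomial is multilinear, \<open>f(Y) = \<Sum>\<^sub>S a\<^sub>S Y\<^sup>S\<close>.
Re-expanding it around the signal, \<open>f(Y) = \<Sum>\<^sub>T d\<^sub>T(X) \<Prod>\<^sub>i\<^sub>\<in>\<^sub>T (Y\<^sub>i - X\<^sub>i)\<close>, the
centred monomials are orthogonal given \<open>X\<close> with norms \<open>\<Prod>\<^sub>i\<^sub>\<in>\<^sub>T X\<^sub>i(1 - X\<^sub>i) \<ge> (\<tau>\<^sub>0(1 - \<tau>\<^sub>1))\<^bsup>|T|\<^esup>\<close>,
so by Jensen \<open>E f(Y)\<^sup>2 \<ge> \<Sum>\<^sub>T (\<tau>\<^sub>0(1 - \<tau>\<^sub>1))\<^bsup>|T|\<^esup> (E d\<^sub>T)\<^sup>2\<close>. On the other hand the recursion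
defining \<open>\<kappa>\<close> is exactly what turns \<open>E[f(Y) x] = \<Sum>\<^sub>S a\<^sub>S E[x X\<^sup>S]\<close> into \<open>\<Sum>\<^sub>T \<kappa>\<^sub>T E d\<^sub>T\<close>,
and weighted Cauchy-Schwarz compares the two.\<close>

definition bern_exp :: "nat \<Rightarrow> (nat \<Rightarrow> real) \<Rightarrow> ((nat \<Rightarrow> real) \<Rightarrow> real) \<Rightarrow> real" where
  "bern_exp N X F = (\<Sum>y\<in>binary_vectors N. bern_lik N X y * F y)"

lemma bern_exp_prod:
  "bern_exp N X (\<lambda>y. \<Prod>i<N. h i (y i)) = (\<Prod>i<N. (1 - X i) * h i 0 + X i * h i 1)"
proof -
  have "(\<Prod>i<N. (1 - X i) * h i 0 + X i * h i 1)
      = (\<Prod>i<N. \<Sum>t\<in>{0,1::real}. (if t = 1 then X i else 1 - X i) * h i t)"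
    by (intro prod.cong) auto
  also have "\<dots> = (\<Sum>y\<in>binary_vectors N. \<Prod>i<N. (if y i = 1 then X i else 1 - X i) * h i (y i))"
    unfolding binary_vectors_def by (subst prod_sum_PiE) auto
  also have "\<dots> = bern_exp N X (\<lambda>y. \<Prod>i<N. h i (y i))"
    unfolding bern_exp_def bern_lik_def by (simp add: prod.distrib)
  finally show ?thesis by simp
qed

lemma sum_bern_lik: "(\<Sum>y\<in>binary_vectors N. bern_lik N X y) = 1"
  using bern_exp_prod[of N X "\<lambda>_ _. 1"] by (simp add: bern_exp_def)

lemma bern_exp_sum:
  "finite A \<Longrightarrow> bern_exp N X (\<lambda>y. \<Sum>a\<in>A. F a y) = (\<Sum>a\<in>A. bern_exp N X (F a))"
  unfolding bern_exp_def by (simp add: sum_distrib_left sum.swap[of _ A])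

lemma bern_exp_cmult: "bern_exp N X (\<lambda>y. c * F y) = c * bern_exp N X F"
  unfolding bern_exp_def by (simp add: sum_distrib_left ac_simps)

lemma bern_exp_monomial:
  assumes "S \<subseteq> {..<N}"
  shows "bern_exp N X (\<lambda>y. \<Prod>i\<in>S. y i) = (\<Prod>i\<in>S. X i)"
proof -
  have "bern_exp N X (\<lambda>y. \<Prod>i\<in>S. y i)
      = bern_exp N X (\<lambda>y. \<Prod>i<N. (\<lambda>i t. if i \<in> S then t else 1) i (y i))"
    using assms by (simp add: prod.If_cases Int_absorb1 Int_absorb2)
  also have "\<dots> = (\<Prod>i<N. if i \<in> S then X i else 1)"
    by (subst bern_exp_prod) (intro prod.cong, auto)
  also have "\<dots> = (\<Prod>i\<in>S. X i)"
    using assms by (simp add: prod.If_cases Int_absorb1 Int_absorb2)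
  finally show ?thesis .
qed

lemma bern_exp_centered_orthogonal:
  assumes T: "T \<subseteq> {..<N}" and U: "U \<subseteq> {..<N}"
  shows "bern_exp N X (\<lambda>y. (\<Prod>i\<in>T. y i - X i) * (\<Prod>i\<in>U. y i - X i))
     = (if T = U then (\<Prod>i\<in>T. X i * (1 - X i)) else 0)"
proof -
  define h where "h i t = (if i \<in> T then t - X i else 1) * (if i \<in> U then t - X i else 1)" for i t
  have "bern_exp N X (\<lambda>y. (\<Prod>i\<in>T. y i - X i) * (\<Prod>i\<in>U. y i - X i))
      = bern_exp N X (\<lambda>y. \<Prod>i<N. h i (y i))"
    unfolding h_def prod.distrib using T U by (simp add: prod.If_cases Int_absorb1 Int_absorb2)
  also have "\<dots> = (\<Prod>i<N. (1 - X i) * h i 0 + X i * h i 1)"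
    by (rule bern_exp_prod)
  also have "\<dots> = (\<Prod>i<N. if i \<in> T \<and> i \<in> U then X i * (1 - X i)
                          else if i \<in> T \<or> i \<in> U then 0 else 1)"
    by (intro prod.cong refl) (auto simp: h_def algebra_simps power2_eq_square)
  also have "\<dots> = (if T = U then (\<Prod>i\<in>T. X i * (1 - X i)) else 0)"
  proof (cases "T = U")
    case True
    then show ?thesis using T by (simp add: prod.If_cases Int_absorb1 Int_absorb2)
  next
    case False
    then obtain i where "i \<in> T \<and> i \<notin> U \<or> i \<in> U \<and> i \<notin> T" by blast
    moreover have "i < N" using calculation T U by auto
    ultimately show ?thesis using False by (subst prod_zero) (auto intro!: bexI[of _ i])
  qed
  finally show ?thesis .
qed

definition multilin :: "nat \<Rightarrow> (nat set \<Rightarrow> real) \<Rightarrow> (nat \<Rightarrow> real) \<Rightarrow> real" where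
  "multilin N a z = (\<Sum>S\<in>Pow {..<N}. a S * (\<Prod>i\<in>S. z i))"

lemma bern_exp_multilin: "bern_exp N X (multilin N a) = multilin N a X"
  unfolding multilin_def by (subst bern_exp_sum) (auto simp: bern_exp_cmult bern_exp_monomial)

definition centered_coeff :: "nat \<Rightarrow> (nat set \<Rightarrow> real) \<Rightarrow> (nat \<Rightarrow> real) \<Rightarrow> nat set \<Rightarrow> real" where
  "centered_coeff N a X T = (\<Sum>S\<in>{S\<in>Pow {..<N}. T \<subseteq> S}. a S * (\<Prod>i\<in>S - T. X i))"

lemma multilin_centered_expansion:
  "multilin N a y = (\<Sum>T\<in>Pow {..<N}. centered_coeff N a X T * (\<Prod>i\<in>T. y i - X i))"
proof -
  have "multilin N a y = (\<Sum>S\<in>Pow {..<N}. a S * (\<Prod>i\<in>S. (y i - X i) + X i))"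
    unfolding multilin_def by simp
  also have "\<dots> = (\<Sum>S\<in>Pow {..<N}. \<Sum>T\<in>{T\<in>Pow {..<N}. T \<subseteq> S}.
        a S * ((\<Prod>i\<in>T. y i - X i) * (\<Prod>i\<in>S - T. X i)))"
  proof (intro sum.cong refl)
    fix S assume S: "S \<in> Pow {..<N}"
    hence "Pow S = {T\<in>Pow {..<N}. T \<subseteq> S}" by auto
    moreover have "finite S" using S by (auto intro: finite_subset)
    ultimately show "a S * (\<Prod>i\<in>S. (y i - X i) + X i) = (\<Sum>T\<in>{T\<in>Pow {..<N}. T \<subseteq> S}.
        a S * ((\<Prod>i\<in>T. y i - X i) * (\<Prod>i\<in>S - T. X i)))"
      using prod_add[of S "\<lambda>i. y i - X i" X] by (simp add: sum_distrib_left)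
  qed
  also have "\<dots> = (\<Sum>T\<in>Pow {..<N}. \<Sum>S\<in>{S\<in>Pow {..<N}. T \<subseteq> S}.
        a S * ((\<Prod>i\<in>T. y i - X i) * (\<Prod>i\<in>S - T. X i)))"
    by (rule sum.swap_restrict) auto
  also have "\<dots> = (\<Sum>T\<in>Pow {..<N}. centered_coeff N a X T * (\<Prod>i\<in>T. y i - X i))"
    unfolding centered_coeff_def sum_distrib_right by (intro sum.cong refl) (simp add: ac_simps)
  finally show ?thesis .
qed

lemma bern_exp_multilin_sq:
  "bern_exp N X (\<lambda>y. (multilin N a y)^2)
     = (\<Sum>T\<in>Pow {..<N}. (centered_coeff N a X T)^2 * (\<Prod>i\<in>T. X i * (1 - X i)))"
proof -
  let ?P = "Pow {..<N}" and ?d = "centered_coeff N a X"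
  let ?p = "\<lambda>T y. \<Prod>i\<in>T. y i - X i"
  have "bern_exp N X (\<lambda>y. (multilin N a y)^2)
      = bern_exp N X (\<lambda>y. \<Sum>T\<in>?P. \<Sum>U\<in>?P. ?d T * ?d U * (?p T y * ?p U y))"
    by (simp add: multilin_centered_expansion[of N a _ X] power2_eq_square sum_product ac_simps)
  also have "\<dots> = (\<Sum>T\<in>?P. \<Sum>U\<in>?P. ?d T * ?d U * bern_exp N X (\<lambda>y. ?p T y * ?p U y))"
    by (simp add: bern_exp_sum bern_exp_cmult)
  also have "\<dots> = (\<Sum>T\<in>?P. \<Sum>U\<in>?P. if T = U then ?d T * ?d U * (\<Prod>i\<in>T. X i * (1 - X i)) else 0)"
    by (intro sum.cong refl) (simp add: bern_exp_centered_orthogonal)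
  also have "\<dots> = (\<Sum>T\<in>?P. (?d T)^2 * (\<Prod>i\<in>T. X i * (1 - X i)))"
    by (simp add: power2_eq_square)
  finally show ?thesis .
qed

definition monomial_support :: "nat \<Rightarrow> (nat \<Rightarrow> nat) \<Rightarrow> nat set" where
  "monomial_support N e = {i. i < N \<and> e i \<noteq> 0}"

definition multilin_coeff :: "nat \<Rightarrow> nat \<Rightarrow> ((nat \<Rightarrow> nat) \<Rightarrow> real) \<Rightarrow> nat set \<Rightarrow> real" where
  "multilin_coeff N D c S = (\<Sum>e\<in>{e \<in> monomials N D. monomial_support N e = S}. c e)"

lemma finite_monomials: "finite (monomials N D)"
proof (rule finite_subset)
  show "monomials N D \<subseteq>
      {e. \<forall>x. (x \<in> {..<N} \<longrightarrow> e x \<in> {..D}) \<and> (x \<notin> {..<N} \<longrightarrow> e x = 0)}"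
  proof (intro subsetI CollectI allI conjI impI)
    fix e x assume e: "e \<in> monomials N D" and x: "x \<in> {..<N}"
    have "e x \<le> (\<Sum>i<N. e i)" using x by (intro member_le_sum) auto
    thus "e x \<in> {..D}" using e by (auto simp: monomials_def)
  next
    fix e x assume "e \<in> monomials N D" "x \<notin> {..<N}"
    thus "e x = 0" by (auto simp: monomials_def)
  qed
qed (rule finite_set_of_finite_funs, auto)

lemma monomial_binary_vector:
  assumes y: "y \<in> binary_vectors N"
  shows "(\<Prod>i<N. y i ^ e i) = (\<Prod>i\<in>monomial_support N e. y i)"
proof -
  have "(\<Prod>i<N. y i ^ e i) = (\<Prod>i<N. if e i \<noteq> 0 then y i else 1)"
  proof (intro prod.cong refl)
    fix i assume "i \<in> {..<N}"
    hence "y i = 0 \<or> y i = 1" using y by (auto simp: binary_vectors_def)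
    thus "y i ^ e i = (if e i \<noteq> 0 then y i else 1)" by auto
  qed
  also have "\<dots> = (\<Prod>i\<in>monomial_support N e. y i)"
    unfolding monomial_support_def using prod.inter_filter[of "{..<N}" y "\<lambda>i. e i \<noteq> 0"]
    by (simp add: lessThan_def)
  finally show ?thesis .
qed

lemma poly_eval_eq_multilin:
  assumes "y \<in> binary_vectors N"
  shows "poly_eval N D c y = multilin N (multilin_coeff N D c) y"
proof -
  have "poly_eval N D c y = (\<Sum>e\<in>monomials N D. c e * (\<Prod>i\<in>monomial_support N e. y i))"
    unfolding poly_eval_def using monomial_binary_vector[OF assms] by simp
  also have "\<dots> = (\<Sum>S\<in>Pow {..<N}. \<Sum>e\<in>{e \<in> monomials N D. monomial_support N e = S}.
                     c e * (\<Prod>i\<in>monomial_support N e. y i))"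
    by (rule sum.group[symmetric]) (auto simp: finite_monomials monomial_support_def)
  also have "\<dots> = multilin N (multilin_coeff N D c) y"
    unfolding multilin_def multilin_coeff_def sum_distrib_right by (intro sum.cong refl) auto
  finally show ?thesis .
qed

lemma multilin_coeff_eq_0:
  assumes "D < card S"
  shows "multilin_coeff N D c S = 0"
proof -
  have "{e \<in> monomials N D. monomial_support N e = S} = {}"
  proof safe
    fix e assume e: "e \<in> monomials N D" and S: "S = monomial_support N e"
    have "card (monomial_support N e) = (\<Sum>i\<in>monomial_support N e. 1)" by simp
    also have "\<dots> \<le> (\<Sum>i\<in>monomial_support N e. e i)"
      by (intro sum_mono) (auto simp: monomial_support_def)
    also have "\<dots> \<le> (\<Sum>i<N. e i)" by (intro sum_mono2) (auto simp: monomial_support_def)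
    also have "\<dots> \<le> D" using e by (simp add: monomials_def)
    finally show "e \<in> {}" using assms S by simp
  qed
  thus ?thesis unfolding multilin_coeff_def by (simp only: sum.empty)
qed

lemma poly_eval_const_one: "poly_eval N D (\<lambda>e. if e = (\<lambda>_. 0) then 1 else 0) y = 1"
proof -
  have "(\<lambda>_. 0) \<in> monomials N D" by (simp add: monomials_def)
  moreover have "poly_eval N D (\<lambda>e. if e = (\<lambda>_. 0) then 1 else 0) y
     = (\<Sum>e\<in>monomials N D. if e = (\<lambda>_. 0) then (\<Prod>i<N. y i ^ e i) else 0)"
    unfolding poly_eval_def by (intro sum.cong refl) auto
  ultimately show ?thesis by (simp add: finite_monomials)
qed

lemma Cauchy_Schwarz_weighted_sum:
  fixes x y p :: "'a \<Rightarrow> real"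
  assumes "\<And>i. i \<in> A \<Longrightarrow> 0 < p i"
  shows "(\<Sum>i\<in>A. x i * y i)^2 \<le> (\<Sum>i\<in>A. (x i)^2 / p i) * (\<Sum>i\<in>A. p i * (y i)^2)"
proof -
  have "(\<Sum>i\<in>A. x i * y i) = (\<Sum>i\<in>A. (x i / sqrt (p i)) * (y i * sqrt (p i)))"
  proof (intro sum.cong refl)
    fix i assume "i \<in> A"
    hence "sqrt (p i) \<noteq> 0" using assms by fastforce
    thus "x i * y i = (x i / sqrt (p i)) * (y i * sqrt (p i))" by (simp add: field_simps)
  qed
  moreover have "(\<Sum>i\<in>A. (x i)^2 / p i) = (\<Sum>i\<in>A. (x i / sqrt (p i))^2)"
    using assms by (intro sum.cong refl) (simp add: power_divide less_imp_le)
  moreover have "(\<Sum>i\<in>A. p i * (y i)^2) = (\<Sum>i\<in>A. (y i * sqrt (p i))^2)"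
    using assms by (intro sum.cong refl) (simp add: power_mult_distrib less_imp_le)
  ultimately show ?thesis by (simp only: Cauchy_Schwarz_ineq_sum)
qed

lemma cSup_square_le:
  fixes A :: "real set"
  assumes "r\<^sub>0 \<in> A" and le: "\<And>r. r \<in> A \<Longrightarrow> r^2 \<le> R"
  shows "(Sup A)^2 \<le> R"
proof -
  have R: "0 \<le> R" using le[OF assms(1)] by (meson order_trans zero_le_power2)
  have ub: "r \<le> sqrt R" if "r \<in> A" for r using le[OF that] by (rule real_le_rsqrt)
  have "Sup A \<le> sqrt R" using assms(1) ub by (intro cSup_least) auto
  moreover have "r\<^sub>0 \<le> Sup A" using assms(1) ub by (intro cSup_upper) (auto intro: bdd_aboveI[of A "sqrt R"])
  moreover have "- r\<^sub>0 \<le> sqrt R" using le[OF assms(1)] by (intro real_le_rsqrt) simp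
  ultimately have "\<bar>Sup A\<bar> \<le> sqrt R" by linarith
  hence "\<bar>Sup A\<bar>^2 \<le> (sqrt R)^2" by (intro power_mono) auto
  thus ?thesis using R by simp
qed

lemma (in prob_space) square_expectation_le:
  fixes f :: "'a \<Rightarrow> real"
  assumes "integrable M f" and "integrable M (\<lambda>x. (f x)^2)"
  shows "(expectation f)^2 \<le> expectation (\<lambda>x. (f x)^2)"
  using variance_positive[of f] variance_eq[OF assms] by simp

definition ae_bounded :: "'a measure \<Rightarrow> ('a \<Rightarrow> real) \<Rightarrow> bool" where
  "ae_bounded M f \<longleftrightarrow> f \<in> borel_measurable M \<and> (\<exists>B. AE x in M. \<bar>f x\<bar> \<le> B)"

lemma ae_bounded_const: "ae_bounded M (\<lambda>x. c)"
  unfolding ae_bounded_def by (auto intro: exI[of _ "\<bar>c\<bar>"])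

lemma ae_bounded_add:
  assumes "ae_bounded M f" "ae_bounded M h"
  shows "ae_bounded M (\<lambda>x. f x + h x)"
proof -
  obtain B C where "AE x in M. \<bar>f x\<bar> \<le> B" "AE x in M. \<bar>h x\<bar> \<le> C"
    using assms unfolding ae_bounded_def by blast
  hence "AE x in M. \<bar>f x + h x\<bar> \<le> B + C" by eventually_elim auto
  thus ?thesis using assms unfolding ae_bounded_def by auto
qed

lemma ae_bounded_mult:
  assumes "ae_bounded M f" "ae_bounded M h"
  shows "ae_bounded M (\<lambda>x. f x * h x)"
proof -
  obtain B C where "AE x in M. \<bar>f x\<bar> \<le> B" "AE x in M. \<bar>h x\<bar> \<le> C"
    using assms unfolding ae_bounded_def by blast
  hence "AE x in M. \<bar>f x * h x\<bar> \<le> B * C"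
    by eventually_elim (auto simp: abs_mult intro!: mult_mono)
  thus ?thesis using assms unfolding ae_bounded_def by auto
qed

lemma ae_bounded_diff:
  assumes "ae_bounded M f" "ae_bounded M h"
  shows "ae_bounded M (\<lambda>x. f x - h x)"
proof -
  obtain B C where "AE x in M. \<bar>f x\<bar> \<le> B" "AE x in M. \<bar>h x\<bar> \<le> C"
    using assms unfolding ae_bounded_def by blast
  hence "AE x in M. \<bar>f x - h x\<bar> \<le> B + C" by eventually_elim auto
  thus ?thesis using assms unfolding ae_bounded_def by auto
qed

lemma ae_bounded_sum:
  "finite A \<Longrightarrow> (\<And>i. i \<in> A \<Longrightarrow> ae_bounded M (f i)) \<Longrightarrow> ae_bounded M (\<lambda>x. \<Sum>i\<in>A. f i x)"
  by (induction A rule: finite_induct) (auto intro: ae_bounded_add ae_bounded_const)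

lemma ae_bounded_prod:
  "finite A \<Longrightarrow> (\<And>i. i \<in> A \<Longrightarrow> ae_bounded M (f i)) \<Longrightarrow> ae_bounded M (\<lambda>x. \<Prod>i\<in>A. f i x)"
  by (induction A rule: finite_induct) (auto intro: ae_bounded_mult ae_bounded_const)

lemma integrable_ae_bounded:
  assumes "finite_measure M" and "ae_bounded M f"
  shows "integrable M f"
proof -
  obtain B where "AE x in M. \<bar>f x\<bar> \<le> B" "f \<in> borel_measurable M"
    using assms(2) unfolding ae_bounded_def by blast
  thus ?thesis by (intro finite_measure.integrable_const_bound[OF assms(1), of f B]) simp_all
qed

lemma integrable_mult_ae_bounded:
  fixes g :: "'a \<Rightarrow> real"
  assumes "integrable M g" and "ae_bounded M f"
  shows "integrable M (\<lambda>x. g x * f x)"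
proof -
  obtain B where B: "AE x in M. \<bar>f x\<bar> \<le> B" and f: "f \<in> borel_measurable M"
    using assms(2) unfolding ae_bounded_def by blast
  show ?thesis
  proof (rule Bochner_Integration.integrable_bound)
    show "integrable M (\<lambda>x. B * g x)" using assms(1) by simp
    show "(\<lambda>x. g x * f x) \<in> borel_measurable M" using assms(1) f by auto
    show "AE x in M. norm (g x * f x) \<le> norm (B * g x)"
      using B
    proof eventually_elim
      fix x assume "\<bar>f x\<bar> \<le> B"
      hence "\<bar>g x\<bar> * \<bar>f x\<bar> \<le> \<bar>g x\<bar> * \<bar>B\<bar>" by (intro mult_left_mono) auto
      thus "norm (g x * f x) \<le> norm (B * g x)" by (simp add: abs_mult mult.commute)
    qed
  qed
qed

lemma sum_weighted_sq_le_sum_sq_variance: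
  fixes d :: "nat set \<Rightarrow> real"
  assumes K: "K \<subseteq> Pow {..<N}" and "0 < \<tau>\<^sub>0" "\<tau>\<^sub>1 < 1"
    and X: "\<forall>i<N. \<tau>\<^sub>0 \<le> X i \<and> X i \<le> \<tau>\<^sub>1"
  shows "(\<Sum>T\<in>K. (\<tau>\<^sub>0 * (1 - \<tau>\<^sub>1)) ^ card T * (d T)^2)
     \<le> (\<Sum>T\<in>Pow {..<N}. (d T)^2 * (\<Prod>i\<in>T. X i * (1 - X i)))"
proof -
  let ?w = "\<tau>\<^sub>0 * (1 - \<tau>\<^sub>1)"
  have w: "0 \<le> ?w" using assms by simp
  have "(\<Sum>T\<in>K. ?w ^ card T * (d T)^2) \<le> (\<Sum>T\<in>Pow {..<N}. ?w ^ card T * (d T)^2)"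
    using K w by (intro sum_mono2) auto
  also have "\<dots> \<le> (\<Sum>T\<in>Pow {..<N}. (d T)^2 * (\<Prod>i\<in>T. X i * (1 - X i)))"
  proof (intro sum_mono)
    fix T assume T: "T \<in> Pow {..<N}"
    have "?w ^ card T = (\<Prod>i\<in>T. ?w)" by simp
    also have "\<dots> \<le> (\<Prod>i\<in>T. X i * (1 - X i))"
    proof (intro prod_mono conjI)
      fix i assume "i \<in> T"
      hence "\<tau>\<^sub>0 \<le> X i" "X i \<le> \<tau>\<^sub>1" using X T by auto
      thus "0 \<le> ?w" "?w \<le> X i * (1 - X i)" using assms by (auto intro!: mult_mono)
    qed
    finally show "?w ^ card T * (d T)^2 \<le> (d T)^2 * (\<Prod>i\<in>T. X i * (1 - X i))"
      by (metis mult.commute mult_left_mono zero_le_power2)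
  qed
  finally show ?thesis .
qed

lemma joint_exp_poly_eval_sq:
  "joint_exp mu N (\<lambda>X y. (poly_eval N D c y)^2) =
    (\<integral>X. (\<Sum>T\<in>Pow {..<N}. (centered_coeff N (multilin_coeff N D c) X T)^2
                         * (\<Prod>i\<in>T. X i * (1 - X i))) \<partial>mu)"
  unfolding joint_exp_def
proof (intro Bochner_Integration.integral_cong refl)
  fix X
  have "(\<Sum>y\<in>binary_vectors N. bern_lik N X y * (poly_eval N D c y)^2)
      = bern_exp N X (\<lambda>y. (multilin N (multilin_coeff N D c) y)^2)"
    unfolding bern_exp_def by (intro sum.cong refl) (simp add: poly_eval_eq_multilin)
  thus "(\<Sum>y\<in>binary_vectors N. bern_lik N X y * (poly_eval N D c y)^2) =
    (\<Sum>T\<in>Pow {..<N}. (centered_coeff N (multilin_coeff N D c) X T)^2 * (\<Prod>i\<in>T. X i * (1 - X i)))"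
    by (simp add: bern_exp_multilin_sq)
qed

locale binary_model = prob_space mu for mu :: "(nat \<Rightarrow> real) measure" +
  fixes N :: nat and \<tau>\<^sub>0 \<tau>\<^sub>1 :: real and g :: "(nat \<Rightarrow> real) \<Rightarrow> real"
  assumes sets_eq: "sets mu = sets (PiM {..<N} (\<lambda>_. borel))"
    and tau0_pos: "0 < \<tau>\<^sub>0" and tau1_less_1: "\<tau>\<^sub>1 < 1"
    and AE_signal_bounds: "AE X in mu. \<forall>i<N. \<tau>\<^sub>0 \<le> X i \<and> X i \<le> \<tau>\<^sub>1"
    and g_measurable: "g \<in> borel_measurable mu"
    and g_square_integrable: "integrable mu (\<lambda>X. (g X)^2)"
begin

lemma ae_bounded_coordinate:
  assumes "i < N"
  shows "ae_bounded mu (\<lambda>X. X i)"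
proof -
  have "(\<lambda>X. X i) \<in> borel_measurable (PiM {..<N} (\<lambda>_. borel))"
    using assms by (intro measurable_component_singleton) simp
  hence "(\<lambda>X. X i) \<in> borel_measurable mu"
    using measurable_cong_sets[OF sets_eq refl] by blast
  moreover have "AE X in mu. \<bar>X i\<bar> \<le> 1"
    using AE_signal_bounds by eventually_elim (use assms tau0_pos tau1_less_1 in auto)
  ultimately show ?thesis unfolding ae_bounded_def by blast
qed

lemma ae_bounded_monomial: "S \<subseteq> {..<N} \<Longrightarrow> ae_bounded mu (\<lambda>X. \<Prod>i\<in>S. X i)"
  by (intro ae_bounded_prod) (auto intro: finite_subset ae_bounded_coordinate)

lemma ae_bounded_centered_coeff: "ae_bounded mu (\<lambda>X. centered_coeff N a X T)"
  unfolding centered_coeff_def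
  by (intro ae_bounded_sum ae_bounded_mult ae_bounded_const ae_bounded_monomial) auto

lemma integrable_g: "integrable mu g"
  by (rule square_integrable_imp_integrable[OF g_measurable g_square_integrable])

lemma integral_g_monomial_eq_sum_kappa:
  assumes "finite S"
  shows "(\<integral>X. g X * (\<Prod>i\<in>S. X i) \<partial>mu)
       = (\<Sum>T\<in>Pow S. kappa mu g T * (\<integral>X. (\<Prod>i\<in>S - T. X i) \<partial>mu))"
proof -
  have "Pow S = insert S {T. T \<subset> S}" by auto
  moreover have "finite {T. T \<subset> S}" using assms by (auto intro: finite_subset[of _ "Pow S"])
  ultimately show ?thesis
    by (simp add: kappa.simps[of mu g S] assms prob_space)
qed

definition mean_centered_coeff :: "(nat set \<Rightarrow> real) \<Rightarrow> nat set \<Rightarrow> real" where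
  "mean_centered_coeff a T = (\<Sum>S\<in>{S\<in>Pow {..<N}. T \<subseteq> S}. a S * (\<integral>X. (\<Prod>i\<in>S - T. X i) \<partial>mu))"

lemma integral_centered_coeff: "(\<integral>X. centered_coeff N a X T \<partial>mu) = mean_centered_coeff a T"
  unfolding centered_coeff_def mean_centered_coeff_def
  by (subst Bochner_Integration.integral_sum)
     (auto intro!: integrable_ae_bounded ae_bounded_mult ae_bounded_const ae_bounded_monomial
       simp: finite_measure_axioms)

lemma mean_centered_coeff_eq_0:
  assumes "\<And>S. D < card S \<Longrightarrow> a S = 0" and "D < card T"
  shows "mean_centered_coeff a T = 0"
proof -
  have "a S = 0" if "S \<subseteq> {..<N}" "T \<subseteq> S" for S
  proof -
    have "card T \<le> card S" using that by (intro card_mono) (auto intro: finite_subset)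
    thus ?thesis using assms by auto
  qed
  thus ?thesis unfolding mean_centered_coeff_def by (intro sum.neutral) auto
qed

lemma joint_exp_poly_eval_mult_g:
  "joint_exp mu N (\<lambda>X y. poly_eval N D c y * g X) =
    (\<Sum>S\<in>Pow {..<N}. multilin_coeff N D c S * (\<integral>X. g X * (\<Prod>i\<in>S. X i) \<partial>mu))"
proof -
  let ?a = "multilin_coeff N D c"
  have "joint_exp mu N (\<lambda>X y. poly_eval N D c y * g X) =
      (\<integral>X. (\<Sum>S\<in>Pow {..<N}. ?a S * (g X * (\<Prod>i\<in>S. X i))) \<partial>mu)"
    unfolding joint_exp_def
  proof (intro Bochner_Integration.integral_cong refl)
    fix X
    have "(\<Sum>y\<in>binary_vectors N. bern_lik N X y * (poly_eval N D c y * g X))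
        = g X * bern_exp N X (multilin N ?a)"
      unfolding bern_exp_def sum_distrib_left by (intro sum.cong refl) (simp add: poly_eval_eq_multilin)
    also have "\<dots> = (\<Sum>S\<in>Pow {..<N}. ?a S * (g X * (\<Prod>i\<in>S. X i)))"
      by (simp add: bern_exp_multilin multilin_def sum_distrib_left ac_simps)
    finally show "(\<Sum>y\<in>binary_vectors N. bern_lik N X y * (poly_eval N D c y * g X))
        = (\<Sum>S\<in>Pow {..<N}. ?a S * (g X * (\<Prod>i\<in>S. X i)))" .
  qed
  also have "\<dots> = (\<Sum>S\<in>Pow {..<N}. ?a S * (\<integral>X. g X * (\<Prod>i\<in>S. X i) \<partial>mu))"
    by (subst Bochner_Integration.integral_sum)
       (auto intro!: integrable_mult_right integrable_mult_ae_bounded integrable_g ae_bounded_monomial)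
  finally show ?thesis .
qed

lemma sum_coeff_moment_eq_sum_kappa:
  assumes "\<And>S. D < card S \<Longrightarrow> a S = 0"
  shows "(\<Sum>S\<in>Pow {..<N}. a S * (\<integral>X. g X * (\<Prod>i\<in>S. X i) \<partial>mu))
     = (\<Sum>T\<in>{S. S \<subseteq> {..<N} \<and> card S \<le> D}. kappa mu g T * mean_centered_coeff a T)"
proof -
  let ?m = "\<lambda>U. \<integral>X. (\<Prod>i\<in>U. X i) \<partial>mu"
  have "(\<Sum>S\<in>Pow {..<N}. a S * (\<integral>X. g X * (\<Prod>i\<in>S. X i) \<partial>mu))
      = (\<Sum>S\<in>Pow {..<N}. \<Sum>T\<in>{T\<in>Pow {..<N}. T \<subseteq> S}. a S * (kappa mu g T * ?m (S - T)))"
  proof (intro sum.cong refl)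
    fix S assume S: "S \<in> Pow {..<N}"
    hence "Pow S = {T\<in>Pow {..<N}. T \<subseteq> S}" by auto
    moreover have "finite S" using S by (auto intro: finite_subset)
    ultimately show "a S * (\<integral>X. g X * (\<Prod>i\<in>S. X i) \<partial>mu)
        = (\<Sum>T\<in>{T\<in>Pow {..<N}. T \<subseteq> S}. a S * (kappa mu g T * ?m (S - T)))"
      by (simp add: integral_g_monomial_eq_sum_kappa sum_distrib_left del: kappa.simps)
  qed
  also have "\<dots> = (\<Sum>T\<in>Pow {..<N}. \<Sum>S\<in>{S\<in>Pow {..<N}. T \<subseteq> S}. a S * (kappa mu g T * ?m (S - T)))"
    by (rule sum.swap_restrict) auto
  also have "\<dots> = (\<Sum>T\<in>Pow {..<N}. kappa mu g T * mean_centered_coeff a T)"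
    unfolding mean_centered_coeff_def sum_distrib_left by (intro sum.cong refl) (simp add: ac_simps)
  also have "\<dots> = (\<Sum>T\<in>{S. S \<subseteq> {..<N} \<and> card S \<le> D}. kappa mu g T * mean_centered_coeff a T)"
    by (rule sum.mono_neutral_right)
       (auto simp del: kappa.simps simp: mean_centered_coeff_eq_0[OF assms] not_le)
  finally show ?thesis .
qed

lemma weighted_sum_mean_coeff_sq_le:
  "(\<Sum>T\<in>{S. S \<subseteq> {..<N} \<and> card S \<le> D}.
      (\<tau>\<^sub>0 * (1 - \<tau>\<^sub>1)) ^ card T * (mean_centered_coeff (multilin_coeff N D c) T)^2)
   \<le> joint_exp mu N (\<lambda>X y. (poly_eval N D c y)^2)"
proof -
  let ?K = "{S. S \<subseteq> {..<N} \<and> card S \<le> D}" and ?w = "\<tau>\<^sub>0 * (1 - \<tau>\<^sub>1)"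
  let ?d = "centered_coeff N (multilin_coeff N D c)"
  have finK: "finite ?K" by (rule finite_subset[of _ "Pow {..<N}"]) auto
  have bounded: "ae_bounded mu (\<lambda>X. (?d X T)^2)" for T
    unfolding power2_eq_square by (intro ae_bounded_mult ae_bounded_centered_coeff)
  have "(\<Sum>T\<in>?K. ?w ^ card T * (mean_centered_coeff (multilin_coeff N D c) T)^2)
      \<le> (\<Sum>T\<in>?K. ?w ^ card T * (\<integral>X. (?d X T)^2 \<partial>mu))"
  proof (intro sum_mono mult_left_mono)
    fix T
    show "(mean_centered_coeff (multilin_coeff N D c) T)^2 \<le> (\<integral>X. (?d X T)^2 \<partial>mu)"
      unfolding integral_centered_coeff[symmetric]
      by (intro square_expectation_le integrable_ae_bounded[OF finite_measure_axioms]
            bounded ae_bounded_centered_coeff)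
    show "0 \<le> ?w ^ card T" using tau0_pos tau1_less_1 by simp
  qed
  also have "\<dots> = (\<integral>X. (\<Sum>T\<in>?K. ?w ^ card T * (?d X T)^2) \<partial>mu)"
    by (subst Bochner_Integration.integral_sum)
       (auto intro!: integrable_mult_right integrable_ae_bounded[OF finite_measure_axioms] bounded)
  also have "\<dots> \<le> (\<integral>X. (\<Sum>T\<in>Pow {..<N}. (?d X T)^2 * (\<Prod>i\<in>T. X i * (1 - X i))) \<partial>mu)"
  proof (rule integral_mono_AE)
    show "integrable mu (\<lambda>X. \<Sum>T\<in>?K. ?w ^ card T * (?d X T)^2)"
      using finK by (intro integrable_ae_bounded[OF finite_measure_axioms] ae_bounded_sum
          ae_bounded_mult[OF ae_bounded_const bounded])
    show "integrable mu (\<lambda>X. \<Sum>T\<in>Pow {..<N}. (?d X T)^2 * (\<Prod>i\<in>T. X i * (1 - X i)))"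
      by (intro integrable_ae_bounded[OF finite_measure_axioms] ae_bounded_sum ae_bounded_mult
          bounded ae_bounded_prod ae_bounded_diff ae_bounded_const ae_bounded_coordinate)
         (auto intro: finite_subset)
    show "AE X in mu. (\<Sum>T\<in>?K. ?w ^ card T * (?d X T)^2)
        \<le> (\<Sum>T\<in>Pow {..<N}. (?d X T)^2 * (\<Prod>i\<in>T. X i * (1 - X i)))"
      using AE_signal_bounds
      by eventually_elim (rule sum_weighted_sq_le_sum_sq_variance, auto simp: tau0_pos tau1_less_1)
  qed
  finally show ?thesis unfolding joint_exp_poly_eval_sq .
qed

lemma correlation_ratio_sq_le:
  assumes V: "joint_exp mu N (\<lambda>X y. (poly_eval N D c y)^2) \<noteq> 0"
  shows "(joint_exp mu N (\<lambda>X y. poly_eval N D c y * g X)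
           / sqrt (joint_exp mu N (\<lambda>X y. (poly_eval N D c y)^2)))^2
     \<le> (\<Sum>S\<in>{S. S \<subseteq> {..<N} \<and> card S \<le> D}. (kappa mu g S)^2 / (\<tau>\<^sub>0 * (1 - \<tau>\<^sub>1)) ^ card S)"
    (is "(?F / sqrt ?V)^2 \<le> ?R")
proof -
  let ?K = "{S. S \<subseteq> {..<N} \<and> card S \<le> D}" and ?w = "\<tau>\<^sub>0 * (1 - \<tau>\<^sub>1)"
  let ?b = "mean_centered_coeff (multilin_coeff N D c)"
  let ?Q = "\<Sum>T\<in>?K. ?w ^ card T * (?b T)^2"
  have w: "0 < ?w" using tau0_pos tau1_less_1 by simp
  have "?F = (\<Sum>T\<in>?K. kappa mu g T * ?b T)"
    unfolding joint_exp_poly_eval_mult_g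
    by (rule sum_coeff_moment_eq_sum_kappa) (rule multilin_coeff_eq_0)
  hence "?F^2 \<le> ?R * ?Q"
    using Cauchy_Schwarz_weighted_sum[of ?K "\<lambda>T. ?w ^ card T" "kappa mu g" ?b] w by simp
  also have "\<dots> \<le> ?R * ?V"
    using weighted_sum_mean_coeff_sq_le w by (intro mult_left_mono sum_nonneg) auto
  finally have FRV: "?F^2 \<le> ?R * ?V" .
  have "0 \<le> ?Q" using w by (intro sum_nonneg) simp
  hence "0 < ?V" using V weighted_sum_mean_coeff_sq_le[of D c] by linarith
  thus ?thesis using FRV by (simp add: power_divide pos_divide_le_eq)
qed

end

theorem mainTheorem3:
  fixes mu :: "(nat \<Rightarrow> real) measure" and N D :: nat and tau0 tau1 :: real
    and g :: "(nat \<Rightarrow> real) \<Rightarrow> real"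
  assumes "prob_space mu"
    and "sets mu = sets (PiM {..<N} (\<lambda>_. borel))"
    and "0 < tau0" and "tau0 \<le> tau1" and "tau1 < 1"
    and "AE X in mu. \<forall>i<N. tau0 \<le> X i \<and> X i \<le> tau1"
    and "g \<in> borel_measurable mu"
    and "integrable mu (\<lambda>X. (g X)^2)"
  shows "(corr_le mu N g D)^2 \<le>
    (\<Sum>S\<in>{S. S \<subseteq> {..<N} \<and> card S \<le> D}.
       (kappa mu g S)^2 / (tau0 * (1 - tau1)) ^ card S)"
proof -
  interpret binary_model mu N tau0 tau1 g
    using assms unfolding binary_model_def binary_model_axioms_def by auto
  let ?V = "\<lambda>c. joint_exp mu N (\<lambda>X y. (poly_eval N D c y)^2)"
  let ?F = "\<lambda>c. joint_exp mu N (\<lambda>X y. poly_eval N D c y * g X)"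
  let ?one = "\<lambda>e::nat \<Rightarrow> nat. if e = (\<lambda>_. 0) then 1::real else 0"
  have "?V ?one = 1"
    unfolding joint_exp_def by (simp add: poly_eval_const_one sum_bern_lik prob_space)
  hence "?F ?one / sqrt (?V ?one) \<in> {?F c / sqrt (?V c) | c. ?V c \<noteq> 0}"
    by (intro CollectI exI[of _ ?one]) simp
  then show ?thesis
    unfolding corr_le_def by (rule cSup_square_le) (auto simp del: kappa.simps intro: correlation_ratio_sq_le)
qed

end
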